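(* Let $A$, $Q$, $H\subseteq A^Q$ be non-empty finite sets, $n\ge3$, $\mathcal F$ a clone with carrier $A$ satisfying $\Delta^s_n$, and suppose $H\in\mathrm{Inv}_Q\mathcal F$. Let $P=\{p,q\}\in[Q]^2$ with $P\not\subseteq Q^{(n)}_H$. Then either (1) $H|_P=\{g\in A^P:g(p)\in H(p),\ g(q)\in H(q)\}$, or (2) there is $\sigma\in S_A$ with $H|_P=\{g\in A^P: g(p)\in H(p),\ g(q)\in H(q),\ g(q)=\sigma(g(p))\}$.
   Context: $\mathcal O(A)=\bigcup_{n<\omega}A^{A^n}$; $\mathcal F_{[n]}=\mathcal F\cap A^{A^n}$; $\mathrm{ran}\,\mathbf x$ is the set of entries of $\mathbf x\in A^n$; $A^n_k=\{\mathbf x\in A^n:|\mathrm{ran}\,\mathbf x|=k\}$, $A^n_{<n}=\bigcup_{k<n}A^n_k$. A clone with carrier $A$ is a subset of $\mathcal O(A)$ containing all projections and closed under composition. For $f\in\mathcal O(A)_{[m]}$, $h_i\in A^Q$, $f(h_0,\dots,h_{m-1})$ is $q\mapsto f(h_0(q)\dots h_{m-1}(q))$; $\mathrm{Inv}_Q\mathcal F$ is the set of $H\subseteq A^Q$ closed under such compositions with $f\in\mathcal F$. $H(q)=\{h(q):h\in H\}$, $H|_P=\{h|_P:h\in H\}$, $[Q]^2$ the 2-element subsets of $Q$, $S_A$ the permutations of $A$, $Q^{(n)}_H=\{q\in Q:|H(q)|<n\}$. $\mathcal F$ satisfies $\Delta^s_n$ if there is $i<n$ such that for every $\mathbf a\in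 A^n_n$ and $a\in\mathrm{ran}\,\mathbf a$ there is $s\in\mathcal F_{[n]}$ with $s(\mathbf a)=a$ and $s(\mathbf x)=x_i$ for all $\mathbf x\in A^n_{<n}$. *)

theory Defs
  imports "HOL-Library.FuncSet"
begin

text \<open>An n-ary operation on A is represented as a pair (n, f) with f :: 'a list => 'a,
  defined (with values in A) exactly on lists of length n over A, and undefined elsewhere.\<close>

definition is_op :: "'a set \<Rightarrow> nat \<Rightarrow> ('a list \<Rightarrow> 'a) \<Rightarrow> bool" where
  "is_op A n f \<longleftrightarrow>
     (\<forall>xs. length xs = n \<and> set xs \<subseteq> A \<longrightarrow> f xs \<in> A) \<and>
     (\<forall>xs. \<not> (length xs = n \<and> set xs \<subseteq> A) \<longrightarrow> f xs = undefined)"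

definition ops :: "'a set \<Rightarrow> (nat \<times> ('a list \<Rightarrow> 'a)) set" where
  "ops A = {(n, f). is_op A n f}"

definition restr_op :: "'a set \<Rightarrow> nat \<Rightarrow> ('a list \<Rightarrow> 'a) \<Rightarrow> ('a list \<Rightarrow> 'a)" where
  "restr_op A n f = (\<lambda>xs. if length xs = n \<and> set xs \<subseteq> A then f xs else undefined)"

definition arity_part :: "(nat \<times> ('a list \<Rightarrow> 'a)) set \<Rightarrow> nat \<Rightarrow> ('a list \<Rightarrow> 'a) set" where
  "arity_part F n = {f. (n, f) \<in> F}"

definition clone :: "'a set \<Rightarrow> (nat \<times> ('a list \<Rightarrow> 'a)) set \<Rightarrow> bool" where
  "clone A F \<longleftrightarrow>
     F \<subseteq> ops A \<and>
     (\<forall>n i. i < n \<longrightarrow> (n, restr_op A n (\<lambda>xs. xs ! i)) \<in> F) \<and>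
     (\<forall>m f n g. f \<in> arity_part F m \<and> (\<forall>j<m. g j \<in> arity_part F n) \<longrightarrow>
        (n, restr_op A n (\<lambda>xs. f (map (\<lambda>j. g j xs) [0..<m]))) \<in> F)"

definition Inv :: "'a set \<Rightarrow> 'q set \<Rightarrow> (nat \<times> ('a list \<Rightarrow> 'a)) set \<Rightarrow> ('q \<Rightarrow> 'a) set set" where
  "Inv A Q F = {H. H \<subseteq> (Q \<rightarrow>\<^sub>E A) \<and>
     (\<forall>m f hs. (m, f) \<in> F \<and> (\<forall>j<m. hs j \<in> H) \<longrightarrow>
        (\<lambda>q\<in>Q. f (map (\<lambda>j. hs j q) [0..<m])) \<in> H)}"

text \<open>Delta^s_n: |ran x| = n for x in A^n means x is distinct; |ran x| < n means not distinct.\<close>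
definition Delta_s :: "'a set \<Rightarrow> (nat \<times> ('a list \<Rightarrow> 'a)) set \<Rightarrow> nat \<Rightarrow> bool" where
  "Delta_s A F n \<longleftrightarrow> (\<exists>i<n. \<forall>a. length a = n \<and> set a \<subseteq> A \<and> card (set a) = n \<longrightarrow>
     (\<forall>b\<in>set a. \<exists>s\<in>arity_part F n. s a = b \<and>
        (\<forall>x. length x = n \<and> set x \<subseteq> A \<and> card (set x) < n \<longrightarrow> s x = x ! i)))"

definition proj_at :: "('q \<Rightarrow> 'a) set \<Rightarrow> 'q \<Rightarrow> 'a set" where
  "proj_at H q = (\<lambda>h. h q) ` H"

definition restr_set :: "('q \<Rightarrow> 'a) set \<Rightarrow> 'q set \<Rightarrow> ('q \<Rightarrow> 'a) set" where
  "restr_set H P = (\<lambda>h. restrict h P) ` H"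

definition small_coords :: "'q set \<Rightarrow> ('q \<Rightarrow> 'a) set \<Rightarrow> nat \<Rightarrow> 'q set" where
  "small_coords Q H n = {q\<in>Q. card (proj_at H q) < n}"

end

theory Submission
  imports Defs
begin

text \<open>Only the binary relation R = {(h p, h q) | h \<in> H} matters. Since H is invariant under F,
  applying a \<open>\<Delta>\<^sup>s\<^sub>n\<close>-operation coordinatewise to n pairs of R whose first entries are
  distinct but whose second entries are not yields a pair of R, and the first entry of that pair
  can be chosen freely among the n given ones while the second is always the i-th. With at
  least n elements on one side this closure property makes R behave like an all-or-nothing
  relation: two pairs sharing a second entry force R to be the full rectangle
  \<open>H(p) \<times> H(q)\<close>. Otherwise R and its converse are both functional, i.e. R is the graph of a
  bijection \<open>H(p) \<rightarrow> H(q)\<close>, which extends to a permutation of the finite set A.\<close>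

definition pair_relation :: "('q \<Rightarrow> 'a) set \<Rightarrow> 'q \<Rightarrow> 'q \<Rightarrow> ('a \<times> 'a) set" where
  "pair_relation H p q = (\<lambda>h. (h p, h q)) ` H"

definition delta_closed :: "('a \<times> 'b) set \<Rightarrow> nat \<Rightarrow> nat \<Rightarrow> bool" where
  "delta_closed R n i \<longleftrightarrow>
     (\<forall>\<phi> \<psi>. (\<forall>k<n. (\<phi> k, \<psi> k) \<in> R) \<longrightarrow> inj_on \<phi> {..<n} \<longrightarrow> \<not> inj_on \<psi> {..<n} \<longrightarrow>
        (\<forall>j<n. (\<phi> j, \<psi> i) \<in> R))"

lemma inj_on_extend:
  assumes "finite X" "finite J" "card J \<le> card X" "I \<subseteq> J" "inj_on f I" "f ` I \<subseteq> X"
  obtains g where "inj_on g J" "g ` J \<subseteq> X" "\<And>k. k \<in> I \<Longrightarrow> g k = f k"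
proof -
  have "finite I" using assms(2,4) finite_subset by blast
  then have "card (J - I) \<le> card (X - f ` I)"
    using assms by (simp add: card_Diff_subset card_image)
  then obtain e where e: "inj_on e (J - I)" "e ` (J - I) \<subseteq> X - f ` I"
    using card_le_inj[of "J - I" "X - f ` I"] assms(1,2) by auto
  define g where "g k = (if k \<in> I then f k else e k)" for k
  have "inj_on g J"
    using e assms(5) unfolding g_def inj_on_def by (auto; blast)
  moreover have "g ` J \<subseteq> X" using e assms(6) unfolding g_def by auto
  ultimately show thesis using that g_def by simp
qed

lemma card_ge_3_obtain_other:
  assumes "finite S" "3 \<le> card S"
  obtains u where "u \<in> S" "u \<noteq> a" "u \<noteq> b"
proof -
  have "\<not> S \<subseteq> {a, b}"
    using card_mono[of "{a, b}" S] card_insert_le_m1[of 2 "{b}" a] assms by auto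
  then show thesis using that by blast
qed

lemma card_Range_le_card_Domain:
  assumes "finite R" "single_valued R"
  shows "card (Range R) \<le> card (Domain R)"
proof -
  have "inj_on fst R" using assms(2) unfolding single_valued_def inj_on_def by auto
  then have "card (Domain R) = card R" by (metis fst_eq_Domain card_image)
  moreover have "card (Range R) \<le> card R" using assms(1) by (metis snd_eq_Range card_image_le)
  ultimately show ?thesis by simp
qed

lemma bij_betw_extend_permutation:
  assumes "finite A" "X \<subseteq> A" "Y \<subseteq> A" "bij_betw f X Y"
  obtains \<sigma> where "bij_betw \<sigma> A A" "\<And>x. x \<in> X \<Longrightarrow> \<sigma> x = f x"
proof -
  have "finite X" "finite Y" using assms(1-3) finite_subset by auto
  then have "card (A - X) = card (A - Y)"
    using assms by (simp add: card_Diff_subset bij_betw_same_card)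
  then obtain e where e: "bij_betw e (A - X) (A - Y)"
    using finite_same_card_bij assms(1) by blast
  define \<sigma> where "\<sigma> x = (if x \<in> X then f x else e x)" for x
  have "bij_betw \<sigma> X Y" using assms(4) by (rule bij_betw_cong[THEN iffD1, rotated]) (simp add: \<sigma>_def)
  moreover have "bij_betw \<sigma> (A - X) (A - Y)" using e
    by (rule bij_betw_cong[THEN iffD1, rotated]) (simp add: \<sigma>_def)
  ultimately have "bij_betw \<sigma> (X \<union> (A - X)) (Y \<union> (A - Y))"
    by (rule bij_betw_combine) auto
  moreover have "X \<union> (A - X) = A" "Y \<union> (A - Y) = A" using assms(2,3) by auto
  ultimately show thesis using that \<sigma>_def by simp
qed

lemma delta_closed_triple:
  assumes "delta_closed R n i" "i < n" "3 \<le> n" "finite (Domain R)" "n \<le> card (Domain R)"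
    and "(x0, y0) \<in> R" "(x1, y1) \<in> R" "(x2, y2) \<in> R"
    and "x0 \<noteq> x1" "x1 \<noteq> x2" "x0 \<noteq> x2"
    and "y0 = y1 \<or> y1 = y2 \<or> y0 = y2"
  shows "(x1, y0) \<in> R" "(x2, y0) \<in> R"
proof -
  obtain j1 where j1: "j1 < n" "j1 \<noteq> i"
    using card_ge_3_obtain_other[of "{..<n}" i i] assms(3) by auto
  obtain j2 where j2: "j2 < n" "j2 \<noteq> i" "j2 \<noteq> j1"
    using card_ge_3_obtain_other[of "{..<n}" i j1] assms(3) by auto
  define \<phi>0 where "\<phi>0 k = (if k = i then x0 else if k = j1 then x1 else x2)" for k
  obtain \<phi> where \<phi>: "inj_on \<phi> {..<n}" "\<phi> ` {..<n} \<subseteq> Domain R"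
    "\<And>k. k \<in> {i, j1, j2} \<Longrightarrow> \<phi> k = \<phi>0 k"
  proof (rule inj_on_extend[of "Domain R" "{..<n}" "{i, j1, j2}" \<phi>0])
    show "inj_on \<phi>0 {i, j1, j2}" using assms(9-11) j1 j2 unfolding \<phi>0_def inj_on_def by auto
    show "\<phi>0 ` {i, j1, j2} \<subseteq> Domain R" using assms(6-8) unfolding \<phi>0_def by auto
  qed (use assms(2,4,5) j1 j2 in auto)
  define \<psi> where "\<psi> k = (if k = i then y0 else if k = j1 then y1 else if k = j2 then y2
     else (SOME y. (\<phi> k, y) \<in> R))" for k
  have pairs: "(\<phi> k, \<psi> k) \<in> R" if "k < n" for k
  proof -
    have "\<exists>y. (\<phi> k, y) \<in> R" using \<phi>(2) that by auto
    then show ?thesis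
      using \<phi>(3) assms(6-8) j1 j2 unfolding \<psi>_def \<phi>0_def by (auto intro: someI_ex)
  qed
  have "\<psi> i = y0" "\<psi> j1 = y1" "\<psi> j2 = y2" using j1 j2 unfolding \<psi>_def by auto
  then have "\<not> inj_on \<psi> {..<n}"
    using assms(2,12) j1 j2 unfolding inj_on_def by (metis lessThan_iff)
  then have "\<forall>j<n. (\<phi> j, \<psi> i) \<in> R"
    using assms(1) pairs \<phi>(1) unfolding delta_closed_def by blast
  then show "(x1, y0) \<in> R" "(x2, y0) \<in> R"
    using j1 j2 \<phi>(3) unfolding \<psi>_def \<phi>0_def by auto
qed

lemma delta_closed_product:
  assumes R: "delta_closed R n i" "i < n" "3 \<le> n" "finite (Domain R)" "n \<le> card (Domain R)"
    and "(a1, b) \<in> R" "(a2, b) \<in> R" "a1 \<noteq> a2"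
  shows "R = Domain R \<times> Range R"
proof -
  have to_b: "(a, b) \<in> R" if a: "a \<in> Domain R" for a
  proof -
    obtain y where "(a, y) \<in> R" using a by auto
    then show ?thesis
      using delta_closed_triple(2)[OF R, of a1 b a2 b a y] assms(6-8)
      by (cases "a = a1 \<or> a = a2") auto
  qed
  have "(a, c) \<in> R" if ac: "a \<in> Domain R" "c \<in> Range R" for a c
  proof -
    obtain a' where a': "(a', c) \<in> R" using ac(2) by blast
    obtain u where u: "u \<in> Domain R" "u \<noteq> a" "u \<noteq> a'"
      using card_ge_3_obtain_other[of "Domain R" a a'] assms(3-5) by auto
    show ?thesis
      using delta_closed_triple(1)[OF R, of a' c a b u b] a' to_b u ac(1)
      by (cases "a = a'") auto
  qed
  then show ?thesis by auto
qed

lemma delta_closed_product_or_bijection: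
  assumes "delta_closed R n i" "delta_closed (R\<inverse>) n i" "i < n" "3 \<le> n" "finite R"
    and "n \<le> card (Domain R) \<or> n \<le> card (Range R)"
  shows "R = Domain R \<times> Range R \<or>
    (\<exists>f. bij_betw f (Domain R) (Range R) \<and> (\<forall>a b. (a, b) \<in> R \<longleftrightarrow> a \<in> Domain R \<and> b = f a))"
proof -
  have fin: "finite (Domain R)" "finite (Domain (R\<inverse>))"
    using assms(5) by (simp_all add: finite_Domain finite_Range)
  have product: "R = Domain R \<times> Range R" if "\<not> single_valued (R\<inverse>)" "n \<le> card (Domain R)"
    using that delta_closed_product[OF assms(1,3,4) fin(1)] unfolding single_valued_def by blast
  have product': "R = Domain R \<times> Range R"
    if not_sv: "\<not> single_valued R" and card: "n \<le> card (Range R)"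
  proof -
    have "n \<le> card (Domain (R\<inverse>))" using card by simp
    moreover obtain a b b' where "(b, a) \<in> R\<inverse>" "(b', a) \<in> R\<inverse>" "b \<noteq> b'"
      using not_sv unfolding single_valued_def by blast
    ultimately have "R\<inverse> = Domain (R\<inverse>) \<times> Range (R\<inverse>)"
      by (rule delta_closed_product[OF assms(2,3,4) fin(2)])
    then show ?thesis by (metis converse_Times converse_converse Domain_converse Range_converse)
  qed
  show ?thesis
  proof (cases "single_valued R"; cases "single_valued (R\<inverse>)")
    assume sv: "single_valued R" "single_valued (R\<inverse>)"
    define f where "f a = (THE b. (a, b) \<in> R)" for a
    have "f a = b" if "(a, b) \<in> R" for a b
      unfolding f_def using that sv(1) by (auto intro: the_equality dest: single_valuedD)
    then have graph: "(a, b) \<in> R \<longleftrightarrow> a \<in> Domain R \<and> b = f a" for a b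
      by (metis DomainE DomainI)
    have "inj_on f (Domain R)"
    proof (rule inj_onI)
      fix a a' assume "a \<in> Domain R" "a' \<in> Domain R" "f a = f a'"
      then have "(f a, a) \<in> R\<inverse>" "(f a, a') \<in> R\<inverse>" using graph by auto
      then show "a = a'" using sv(2) by (auto dest: single_valuedD)
    qed
    moreover have "f ` Domain R = Range R" using graph by blast
    ultimately show ?thesis using graph unfolding bij_betw_def by blast
  next
    assume "single_valued R" "\<not> single_valued (R\<inverse>)"
    moreover have "card (Range R) \<le> card (Domain R)"
      using card_Range_le_card_Domain assms(5) \<open>single_valued R\<close> by blast
    ultimately show ?thesis using product assms(6) by linarith
  next
    assume "\<not> single_valued R" "single_valued (R\<inverse>)"
    moreover have "card (Domain R) \<le> card (Range R)"
      using card_Range_le_card_Domain[of "R\<inverse>"] assms(5) \<open>single_valued (R\<inverse>)\<close> by simp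
    ultimately show ?thesis using product' assms(6) by linarith
  next
    assume "\<not> single_valued R" "\<not> single_valued (R\<inverse>)"
    then show ?thesis using product product' assms(6) by blast
  qed
qed

lemma Domain_pair_relation [simp]: "Domain (pair_relation H p q) = proj_at H p"
  unfolding pair_relation_def proj_at_def by force

lemma Range_pair_relation [simp]: "Range (pair_relation H p q) = proj_at H q"
  unfolding pair_relation_def proj_at_def by force

lemma converse_pair_relation [simp]: "(pair_relation H p q)\<inverse> = pair_relation H q p"
  unfolding pair_relation_def by auto

lemma finite_pair_relation: "finite H \<Longrightarrow> finite (pair_relation H p q)"
  unfolding pair_relation_def by simp

lemma pair_relation_subset:
  assumes "H \<subseteq> Q \<rightarrow>\<^sub>E A" "p \<in> Q" "q \<in> Q"
  shows "pair_relation H p q \<subseteq> A \<times> A"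
  using assms unfolding pair_relation_def by (auto dest!: subsetD)

lemma restr_set_doubleton:
  assumes "H \<subseteq> Q \<rightarrow>\<^sub>E A" "p \<in> Q" "q \<in> Q"
  shows "restr_set H {p, q} = {g \<in> {p, q} \<rightarrow>\<^sub>E A. (g p, g q) \<in> pair_relation H p q}"
proof
  show "restr_set H {p, q} \<subseteq> {g \<in> {p, q} \<rightarrow>\<^sub>E A. (g p, g q) \<in> pair_relation H p q}"
  proof
    fix g assume "g \<in> restr_set H {p, q}"
    then obtain h where "h \<in> H" "g = restrict h {p, q}" unfolding restr_set_def by auto
    moreover have "h \<in> Q \<rightarrow>\<^sub>E A" using assms(1) \<open>h \<in> H\<close> by auto
    ultimately show "g \<in> {g \<in> {p, q} \<rightarrow>\<^sub>E A. (g p, g q) \<in> pair_relation H p q}"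
      using assms(2,3) unfolding pair_relation_def by (auto simp: restrict_PiE_iff)
  qed
next
  show "{g \<in> {p, q} \<rightarrow>\<^sub>E A. (g p, g q) \<in> pair_relation H p q} \<subseteq> restr_set H {p, q}"
  proof
    fix g assume g: "g \<in> {g \<in> {p, q} \<rightarrow>\<^sub>E A. (g p, g q) \<in> pair_relation H p q}"
    then obtain h where h: "h \<in> H" "g p = h p" "g q = h q" unfolding pair_relation_def by auto
    have "g = restrict h {p, q}"
      using g h by (intro ext) (auto simp: PiE_def extensional_def)
    then show "g \<in> restr_set H {p, q}" using h(1) unfolding restr_set_def by auto
  qed
qed

lemma pair_relation_preserved:
  assumes "H \<in> Inv A Q F" "(m, f) \<in> F" "p \<in> Q" "q \<in> Q"
    and "\<And>k. k < m \<Longrightarrow> (xs k, ys k) \<in> pair_relation H p q"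
  shows "(f (map xs [0..<m]), f (map ys [0..<m])) \<in> pair_relation H p q"
proof -
  have "\<forall>k. \<exists>h. k < m \<longrightarrow> h \<in> H \<and> h p = xs k \<and> h q = ys k"
    using assms(5) unfolding pair_relation_def by force
  then obtain hs where hs: "\<And>k. k < m \<Longrightarrow> hs k \<in> H \<and> hs k p = xs k \<and> hs k q = ys k"
    by metis
  let ?g = "\<lambda>r\<in>Q. f (map (\<lambda>k. hs k r) [0..<m])"
  have "?g \<in> H" using assms(1,2) hs unfolding Inv_def by blast
  moreover have "?g p = f (map xs [0..<m])" "?g q = f (map ys [0..<m])"
    using hs assms(3,4) by (auto intro!: arg_cong[where f = f] map_cong)
  ultimately show ?thesis unfolding pair_relation_def by (intro image_eqI[where x = ?g]) auto
qed

lemma Delta_s_pair_relation_delta_closed: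
  assumes "Delta_s A F n" "H \<in> Inv A Q F"
  obtains i where "i < n" "\<And>p q. p \<in> Q \<Longrightarrow> q \<in> Q \<Longrightarrow> delta_closed (pair_relation H p q) n i"
proof -
  obtain i where i: "i < n" and D: "\<forall>a. length a = n \<and> set a \<subseteq> A \<and> card (set a) = n \<longrightarrow>
     (\<forall>b\<in>set a. \<exists>s\<in>arity_part F n. s a = b \<and>
        (\<forall>x. length x = n \<and> set x \<subseteq> A \<and> card (set x) < n \<longrightarrow> s x = x ! i))"
    using assms(1) unfolding Delta_s_def by blast
  have "delta_closed (pair_relation H p q) n i" if pq: "p \<in> Q" "q \<in> Q" for p q
    unfolding delta_closed_def
  proof (intro allI impI)
    fix \<phi> \<psi> j
    assume pairs: "\<forall>k<n. (\<phi> k, \<psi> k) \<in> pair_relation H p q"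
      and "inj_on \<phi> {..<n}" "\<not> inj_on \<psi> {..<n}" "j < n"
    let ?xs = "map \<phi> [0..<n]" and ?ys = "map \<psi> [0..<n]"
    have "H \<subseteq> Q \<rightarrow>\<^sub>E A" using assms(2) unfolding Inv_def by blast
    then have "\<phi> k \<in> A \<and> \<psi> k \<in> A" if "k < n" for k
      using pairs that pair_relation_subset[OF _ pq] by blast
    then have "set ?xs \<subseteq> A" "set ?ys \<subseteq> A" by auto
    moreover have "card (set ?xs) = n"
      using \<open>inj_on \<phi> {..<n}\<close> distinct_card[of ?xs] by (simp add: distinct_map atLeast0LessThan)
    moreover have "card (set ?ys) < n"
    proof -
      have "\<not> distinct ?ys"
        using \<open>\<not> inj_on \<psi> {..<n}\<close> by (simp add: distinct_map atLeast0LessThan)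
      then have "card (set ?ys) \<noteq> length ?ys" using card_distinct by blast
      then show ?thesis using card_length[of ?ys] by simp
    qed
    moreover have "\<phi> j \<in> set ?xs" "length ?xs = n" using \<open>j < n\<close> by auto
    ultimately obtain s where s: "s \<in> arity_part F n" "s ?xs = \<phi> j"
        "\<forall>x. length x = n \<and> set x \<subseteq> A \<and> card (set x) < n \<longrightarrow> s x = x ! i"
      using D by blast
    have "s ?ys = \<psi> i" using s(3) \<open>set ?ys \<subseteq> A\<close> \<open>card (set ?ys) < n\<close> i by simp
    then show "(\<phi> j, \<psi> i) \<in> pair_relation H p q"
      using pair_relation_preserved[OF assms(2) _ pq, of n s \<phi> \<psi>] s(1,2) pairs
      unfolding arity_part_def by simp
  qed
  then show thesis using that i by blast
qed

theorem lemma5: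
  fixes A :: "'a set" and Q :: "'q set" and H :: "('q \<Rightarrow> 'a) set"
    and F :: "(nat \<times> ('a list \<Rightarrow> 'a)) set" and n :: nat and p q :: 'q
  assumes "finite A" "A \<noteq> {}" "finite Q" "Q \<noteq> {}" "finite H" "H \<noteq> {}"
    and "H \<subseteq> (Q \<rightarrow>\<^sub>E A)"
    and "n \<ge> 3" and "clone A F" and "Delta_s A F n"
    and "H \<in> Inv A Q F"
    and "p \<in> Q" "q \<in> Q" "p \<noteq> q"
    and "\<not> {p, q} \<subseteq> small_coords Q H n"
  shows "restr_set H {p, q} =
           {g \<in> {p, q} \<rightarrow>\<^sub>E A. g p \<in> proj_at H p \<and> g q \<in> proj_at H q}
      \<or> (\<exists>\<sigma>. bij_betw \<sigma> A A \<and> restr_set H {p, q} =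
           {g \<in> {p, q} \<rightarrow>\<^sub>E A. g p \<in> proj_at H p \<and> g q \<in> proj_at H q \<and> g q = \<sigma> (g p)})"
proof -
  let ?R = "pair_relation H p q"
  obtain i where "i < n"
    and closed: "\<And>p q. p \<in> Q \<Longrightarrow> q \<in> Q \<Longrightarrow> delta_closed (pair_relation H p q) n i"
    using Delta_s_pair_relation_delta_closed[OF assms(10,11)] by blast
  have "n \<le> card (Domain ?R) \<or> n \<le> card (Range ?R)"
    using assms(12,13,15) unfolding small_coords_def by auto
  with closed[OF assms(12,13)] closed[OF assms(13,12)]
  have "?R = Domain ?R \<times> Range ?R \<or>
    (\<exists>f. bij_betw f (Domain ?R) (Range ?R) \<and> (\<forall>a b. (a, b) \<in> ?R \<longleftrightarrow> a \<in> Domain ?R \<and> b = f a))"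
    using delta_closed_product_or_bijection \<open>i < n\<close> assms(8) finite_pair_relation[OF assms(5)]
    by (metis converse_pair_relation)
  then show ?thesis
    unfolding Domain_pair_relation Range_pair_relation
  proof (elim disjE exE conjE)
    assume "?R = proj_at H p \<times> proj_at H q"
    then show ?thesis using restr_set_doubleton[OF assms(7,12,13)] by simp
  next
    fix f assume f: "bij_betw f (proj_at H p) (proj_at H q)"
      and graph: "\<forall>a b. (a, b) \<in> ?R \<longleftrightarrow> a \<in> proj_at H p \<and> b = f a"
    have "?R \<subseteq> A \<times> A" by (rule pair_relation_subset[OF assms(7,12,13)])
    then have "proj_at H p \<subseteq> A" "proj_at H q \<subseteq> A"
      unfolding pair_relation_def proj_at_def by auto
    then obtain \<sigma> where \<sigma>: "bij_betw \<sigma> A A" "\<And>x. x \<in> proj_at H p \<Longrightarrow> \<sigma> x = f x"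
      using bij_betw_extend_permutation[OF assms(1) _ _ f] by blast
    have "(a, b) \<in> ?R \<longleftrightarrow> a \<in> proj_at H p \<and> b \<in> proj_at H q \<and> b = \<sigma> a" for a b
      using graph \<sigma>(2) bij_betw_apply[OF f] by metis
    then show ?thesis using \<sigma>(1) restr_set_doubleton[OF assms(7,12,13)] by auto
  qed
qed

end
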